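(* Let $C$ be a strongly connected component of $G$. If at least one vertex of $C$ has out-degree greater than one within $C$, then $\psi$ restricted to $\Delta_C$ is chaotic. If every vertex of $C$ has out-degree exactly one within $C$, then $\Delta_C$ is a single periodic orbit of $\psi$.
   Context: $G$ is a finite directed graph (loops allowed) with vertex set $V$. $\Omega$ is the set of bi-infinite paths in $G$, i.e. sequences $(x_i)_{i\in\mathbb Z}\in V^{\mathbb Z}$ such that for every $i$ there is an edge from $x_i$ to $x_{i+1}$. Fix $h>0$. $\bar\Delta$ is the set of functions $x:\mathbb R\to V$ that are constant on each interval $[nh,(n+1)h)$, $n\in\mathbb Z$, and satisfy $(x(ih))_{i\in\mathbb Z}\in\Omega$. $\Delta=\{x(\cdot+t): x\in\bar\Delta,\ t\in\mathbb R\}$, with metric $d(x,y)=\sum_{i\in\mathbb Z}4^{-|i|}\frac1h\int_{ih}^{(i+1)h}\delta(x,y,t)\,dt$, where $\delta(x,y,t)=1$ if $x(t)\ne y(t)$ and $0$ otherwise. The flow $\psi:\mathbb R\times\Delta\to\Delta$ is $\psi(t,x)=x(\cdot+t)$. A strongly connected component of $G$ is a maximal nonempty set $C\subseteq V$ such that for all $u,v\in C$ (including $u=v$) there is a directed path of positive length from $u$ to $v$ with all vertices in $C$. The lift of $C$ is $\Delta_C=\{f\in\Delta: f(t)\in C \text{ for all } t\in\mathbb R\}$. A flow on a metric space $X$ is chaotic if (i) it has sensitive dependence on initial conditions (there is $\delta>0$ such that for every $x\in X$ and every neighborhood $B$ of $x$ there are $y\in B$, $t>0$ with $d(\Phi_t(x),\Phi_t(y))>\delta$),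 (ii) its periodic points are dense in $X$, and (iii) it is topologically transitive (there is $x\in X$ with $\omega(x)=X$, where $\omega(x)$ is the set of limits of $\Phi_{t_k}(x)$ along sequences $t_k\to+\infty$). *)

theory Defs
  imports "HOL-Analysis.Analysis"
begin

text \<open>Directed graph: vertex set = the finite type 'v, edges given by E (loops allowed).\<close>

definition bi_paths :: "('v \<times> 'v) set \<Rightarrow> (int \<Rightarrow> 'v) set" where
  "bi_paths E = {x. \<forall>i. (x i, x (i + 1)) \<in> E}"

definition Delta_bar :: "('v \<times> 'v) set \<Rightarrow> real \<Rightarrow> (real \<Rightarrow> 'v) set" where
  "Delta_bar E h = {x. (\<forall>n::int. \<forall>t. of_int n * h \<le> t \<and> t < of_int (n + 1) * h \<longrightarrow> x t = x (of_int n * h))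
                      \<and> (\<lambda>i::int. x (of_int i * h)) \<in> bi_paths E}"

definition Delta :: "('v \<times> 'v) set \<Rightarrow> real \<Rightarrow> (real \<Rightarrow> 'v) set" where
  "Delta E h = {(\<lambda>s. x (s + t)) | x t. x \<in> Delta_bar E h}"

definition dist_Delta :: "real \<Rightarrow> (real \<Rightarrow> 'v) \<Rightarrow> (real \<Rightarrow> 'v) \<Rightarrow> real" where
  "dist_Delta h x y = (\<Sum>\<^sub>\<infinity>i::int. (1/4) ^ nat \<bar>i\<bar> * (1 / h) *
      integral {of_int i * h .. of_int (i + 1) * h} (\<lambda>t. if x t \<noteq> y t then 1 else 0))"

definition psi :: "real \<Rightarrow> (real \<Rightarrow> 'v) \<Rightarrow> (real \<Rightarrow> 'v)" where
  "psi t x = (\<lambda>s. x (s + t))"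

definition strongly_connected_in :: "('v \<times> 'v) set \<Rightarrow> 'v set \<Rightarrow> bool" where
  "strongly_connected_in E C \<longleftrightarrow> (\<forall>u\<in>C. \<forall>v\<in>C. (u, v) \<in> (E \<inter> C \<times> C)\<^sup>+)"

definition scc :: "('v \<times> 'v) set \<Rightarrow> 'v set \<Rightarrow> bool" where
  "scc E C \<longleftrightarrow> C \<noteq> {} \<and> strongly_connected_in E C \<and>
     (\<forall>D. C \<subseteq> D \<and> D \<noteq> {} \<and> strongly_connected_in E D \<longrightarrow> D = C)"

definition out_degree_in :: "('v \<times> 'v) set \<Rightarrow> 'v set \<Rightarrow> 'v \<Rightarrow> nat" where
  "out_degree_in E C v = card {w \<in> C. (v, w) \<in> E}"

definition lift :: "('v \<times> 'v) set \<Rightarrow> real \<Rightarrow> 'v set \<Rightarrow> (real \<Rightarrow> 'v) set" where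
  "lift E h C = {f \<in> Delta E h. \<forall>t. f t \<in> C}"

definition sensitive :: "'a set \<Rightarrow> ('a \<Rightarrow> 'a \<Rightarrow> real) \<Rightarrow> (real \<Rightarrow> 'a \<Rightarrow> 'a) \<Rightarrow> bool" where
  "sensitive X d Phi \<longleftrightarrow> (\<exists>\<delta>>0. \<forall>x\<in>X. \<forall>B. B \<subseteq> X \<and> (\<exists>e>0. {y\<in>X. d x y < e} \<subseteq> B) \<longrightarrow>
      (\<exists>y\<in>B. \<exists>t>0. d (Phi t x) (Phi t y) > \<delta>))"

definition periodic_point :: "(real \<Rightarrow> 'a \<Rightarrow> 'a) \<Rightarrow> 'a \<Rightarrow> bool" where
  "periodic_point Phi x \<longleftrightarrow> (\<exists>T>0. Phi T x = x)"

definition dense_periodic :: "'a set \<Rightarrow> ('a \<Rightarrow> 'a \<Rightarrow> real) \<Rightarrow> (real \<Rightarrow> 'a \<Rightarrow> 'a) \<Rightarrow> bool" where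
  "dense_periodic X d Phi \<longleftrightarrow> (\<forall>x\<in>X. \<forall>e>0. \<exists>p\<in>X. periodic_point Phi p \<and> d x p < e)"

definition omega_limit :: "'a set \<Rightarrow> ('a \<Rightarrow> 'a \<Rightarrow> real) \<Rightarrow> (real \<Rightarrow> 'a \<Rightarrow> 'a) \<Rightarrow> 'a \<Rightarrow> 'a set" where
  "omega_limit X d Phi x = {y \<in> X. \<exists>t::nat \<Rightarrow> real. filterlim t at_top sequentially \<and>
      (\<lambda>k. d (Phi (t k) x) y) \<longlonglongrightarrow> 0}"

definition transitive :: "'a set \<Rightarrow> ('a \<Rightarrow> 'a \<Rightarrow> real) \<Rightarrow> (real \<Rightarrow> 'a \<Rightarrow> 'a) \<Rightarrow> bool" where
  "transitive X d Phi \<longleftrightarrow> (\<exists>x\<in>X. omega_limit X d Phi x = X)"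

definition chaotic :: "'a set \<Rightarrow> ('a \<Rightarrow> 'a \<Rightarrow> real) \<Rightarrow> (real \<Rightarrow> 'a \<Rightarrow> 'a) \<Rightarrow> bool" where
  "chaotic X d Phi \<longleftrightarrow> sensitive X d Phi \<and> dense_periodic X d Phi \<and> transitive X d Phi"

end

theory Submission
  imports Defs
begin

text \<open>Points of \<open>\<Delta>\<^sub>C\<close> are time shifts of step functions whose symbol sequences are
  bi-infinite paths in \<open>C\<close>, and two of them are close as soon as their symbol sequences agree
  on a long window around time \<open>0\<close>. Strong connectivity closes any finite window of a path into
  a cycle, which gives dense periodic points, and concatenates all finite walks into one
  universal path, whose orbit is dense. A vertex with two successors allows one to change a path
  arbitrarily far in the future; waiting until then separates the two orbits by distance at
  least \<open>1\<close>. If every out-degree is one, the successor map permutes \<open>C\<close>, so a path in \<open>C\<close> is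
  determined by any one of its vertices and all of \<open>\<Delta>\<^sub>C\<close> is the orbit of one periodic path.\<close>

section \<open>The metric on \<open>\<Delta>\<close>\<close>

definition dist_weight_sum :: real where
  "dist_weight_sum = (\<Sum>\<^sub>\<infinity>i::int. (1/2) ^ nat \<bar>i\<bar>)"

lemma summable_on_half_power_abs_int: "(\<lambda>i::int. (1/2::real) ^ nat \<bar>i\<bar>) summable_on UNIV"
proof -
  have geom: "(\<lambda>n::nat. (1/2::real) ^ n) summable_on UNIV"
    by (rule summable_nonneg_imp_summable_on) (auto intro: summable_geometric)
  have "i \<in> range int \<union> range (\<lambda>n. - int n)" for i :: int
    by (cases i rule: int_cases2) auto
  then have "(UNIV::int set) = range int \<union> range (\<lambda>n. - int n)" by blast
  moreover have "(\<lambda>i::int. (1/2::real) ^ nat \<bar>i\<bar>) summable_on range int"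
    using summable_on_reindex[of int UNIV "\<lambda>i::int. (1/2::real) ^ nat \<bar>i\<bar>"] geom
    by (simp add: o_def)
  moreover have "(\<lambda>i::int. (1/2::real) ^ nat \<bar>i\<bar>) summable_on range (\<lambda>n. - int n)"
    using summable_on_reindex[of "\<lambda>n. - int n" UNIV "\<lambda>i::int. (1/2::real) ^ nat \<bar>i\<bar>"] geom
    by (simp add: o_def inj_on_def)
  ultimately show ?thesis using summable_on_union by metis
qed

lemma integral_indicator_bounds:
  assumes "a \<le> b"
  shows "0 \<le> integral {a..b} (\<lambda>t. if P t then 1 else (0::real))"
    and "integral {a..b} (\<lambda>t. if P t then 1 else (0::real)) \<le> b - a"
proof -
  show "0 \<le> integral {a..b} (\<lambda>t. if P t then 1 else (0::real))"
    by (cases "(\<lambda>t. if P t then 1 else (0::real)) integrable_on {a..b}")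
       (auto intro!: integral_nonneg simp: not_integrable_integral)
  show "integral {a..b} (\<lambda>t. if P t then 1 else (0::real)) \<le> b - a"
  proof (cases "(\<lambda>t. if P t then 1 else (0::real)) integrable_on {a..b}")
    case True
    then have "integral {a..b} (\<lambda>t. if P t then 1 else (0::real)) \<le> integral {a..b} (\<lambda>t. 1)"
      by (rule integral_le) auto
    then show ?thesis using assms by (simp add: integral_const_real)
  qed (use assms in \<open>simp add: not_integrable_integral\<close>)
qed

definition block_dist :: "real \<Rightarrow> (real \<Rightarrow> 'v) \<Rightarrow> (real \<Rightarrow> 'v) \<Rightarrow> int \<Rightarrow> real" where
  "block_dist h x y i = (1/4) ^ nat \<bar>i\<bar> * (1 / h) *
      integral {of_int i * h .. of_int (i + 1) * h} (\<lambda>t. if x t \<noteq> y t then 1 else 0)"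

lemma dist_Delta_eq_infsum: "dist_Delta h x y = (\<Sum>\<^sub>\<infinity>i. block_dist h x y i)"
  unfolding dist_Delta_def block_dist_def by simp

lemma block_dist_bounds:
  assumes "h > 0"
  shows "0 \<le> block_dist h x y i" and "block_dist h x y i \<le> (1/4) ^ nat \<bar>i\<bar>"
proof -
  let ?I = "integral {of_int i * h .. of_int (i + 1) * h} (\<lambda>t. if x t \<noteq> y t then 1 else (0::real))"
  have le: "of_int i * h \<le> of_int (i + 1) * h" using assms by (simp add: algebra_simps)
  show "0 \<le> block_dist h x y i"
    unfolding block_dist_def using integral_indicator_bounds(1)[OF le] assms by simp
  have "?I \<le> h" using integral_indicator_bounds(2)[OF le] by (simp add: algebra_simps)
  then have "(1/h) * ?I \<le> 1" using assms by (simp add: field_simps)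
  then show "block_dist h x y i \<le> (1/4) ^ nat \<bar>i\<bar>"
    unfolding block_dist_def using mult_left_mono[of "(1/h) * ?I" 1 "(1/4::real) ^ nat \<bar>i\<bar>"]
    by (simp add: mult.assoc)
qed

lemma block_dist_summable:
  assumes "h > 0"
  shows "block_dist h x y summable_on UNIV"
proof (rule summable_on_comparison_test[OF summable_on_half_power_abs_int])
  fix i :: int
  have "(1/4::real) ^ nat \<bar>i\<bar> \<le> (1/2) ^ nat \<bar>i\<bar>" by (rule power_mono) auto
  then show "block_dist h x y i \<le> (1/2) ^ nat \<bar>i\<bar>"
    using block_dist_bounds(2)[OF assms, of x y i] by linarith
qed (use block_dist_bounds(1)[OF assms] in simp)

lemma dist_Delta_nonneg: "h > 0 \<Longrightarrow> 0 \<le> dist_Delta h x y"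
  unfolding dist_Delta_eq_infsum by (rule infsum_nonneg) (simp add: block_dist_bounds)

text \<open>Agreement on the window \<open>[-N h, (N + 1) h]\<close> kills the blocks \<open>|i| \<le> N\<close>, and the
  weight \<open>4^-|i|\<close> of every other block is at most \<open>2^-N 2^-|i|\<close>.\<close>

lemma dist_Delta_le_if_agree:
  assumes h: "h > 0"
    and agree: "\<And>u. - real N * h \<le> u \<Longrightarrow> u \<le> (real N + 1) * h \<Longrightarrow> x u = y u"
  shows "dist_Delta h x y \<le> (1/2) ^ N * dist_weight_sum"
proof -
  have "(\<Sum>\<^sub>\<infinity>i. block_dist h x y i) \<le> (\<Sum>\<^sub>\<infinity>i::int. (1/2) ^ N * (1/2::real) ^ nat \<bar>i\<bar>)"
  proof (rule infsum_mono[OF block_dist_summable[OF h]])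
    show "(\<lambda>i::int. (1/2) ^ N * (1/2::real) ^ nat \<bar>i\<bar>) summable_on UNIV"
      using summable_on_cmult_right[OF summable_on_half_power_abs_int] by simp
    fix i :: int
    show "block_dist h x y i \<le> (1/2) ^ N * (1/2::real) ^ nat \<bar>i\<bar>"
    proof (cases "\<bar>i\<bar> \<le> int N")
      case True
      have "- real N * h \<le> of_int i * h" "of_int (i + 1) * h \<le> (real N + 1) * h"
        using True h by (intro mult_right_mono; simp)+
      then have "integral {of_int i * h .. of_int (i + 1) * h} (\<lambda>t. if x t \<noteq> y t then 1 else (0::real))
          = integral {of_int i * h .. of_int (i + 1) * h} (\<lambda>t. 0)"
        by (intro integral_cong) (auto simp: agree)
      then show ?thesis unfolding block_dist_def by simp
    next
      case False
      then have "N \<le> nat \<bar>i\<bar>" by simp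
      then obtain k where k: "nat \<bar>i\<bar> = N + k" using le_Suc_ex by blast
      have "(1/4::real) ^ nat \<bar>i\<bar> = (1/2) ^ (N + k) * (1/2) ^ (N + k)"
        by (simp add: k power_mult_distrib[symmetric] power_divide)
      also have "\<dots> \<le> (1/2) ^ N * (1/2) ^ (N + k)"
        by (intro mult_right_mono power_decreasing) auto
      finally show ?thesis using block_dist_bounds(2)[OF h, of x y i] k by simp
    qed
  qed
  also have "\<dots> = (1/2) ^ N * dist_weight_sum"
    unfolding dist_weight_sum_def by (rule infsum_cmult_right')
  finally show ?thesis by (simp add: dist_Delta_eq_infsum)
qed

lemma dist_Delta_ge_1_if_differ:
  assumes h: "h > 0" and differ: "\<And>u. 0 \<le> u \<Longrightarrow> u < h \<Longrightarrow> x u \<noteq> y u"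
  shows "1 \<le> dist_Delta h x y"
proof -
  have "integral {0..h} (\<lambda>t. if x t \<noteq> y t then 1 else (0::real)) = integral {0..h} (\<lambda>t. 1)"
    by (rule integral_spike[where S="{h}"]) (auto simp: differ)
  then have "block_dist h x y 0 = 1" unfolding block_dist_def using h by (simp add: integral_const_real)
  moreover have "sum (block_dist h x y) {0} \<le> (\<Sum>\<^sub>\<infinity>i. block_dist h x y i)"
    by (rule finite_sum_le_infsum[OF block_dist_summable[OF h]]) (auto simp: block_dist_bounds h)
  ultimately show ?thesis by (simp add: dist_Delta_eq_infsum)
qed

section \<open>Suspensions of bi-infinite paths\<close>

definition path_in :: "('v \<times> 'v) set \<Rightarrow> 'v set \<Rightarrow> (int \<Rightarrow> 'v) \<Rightarrow> bool" where
  "path_in E C p \<longleftrightarrow> (\<forall>i. (p i, p (i + 1)) \<in> E \<inter> C \<times> C)"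

definition suspend :: "real \<Rightarrow> (int \<Rightarrow> 'v) \<Rightarrow> real \<Rightarrow> real \<Rightarrow> 'v" where
  "suspend h p s = (\<lambda>u. p \<lfloor>(u + s) / h\<rfloor>)"

lemma path_in_memD: "path_in E C p \<Longrightarrow> p i \<in> C"
  unfolding path_in_def by blast

lemma floor_divide_eq_iff:
  fixes h t :: real
  assumes "h > 0"
  shows "\<lfloor>t / h\<rfloor> = n \<longleftrightarrow> of_int n * h \<le> t \<and> t < of_int (n + 1) * h"
  using assms by (simp add: floor_eq_iff pos_le_divide_eq pos_divide_less_eq)

lemma suspend_shift:
  assumes "h > 0"
  shows "suspend h p (s + of_int n * h) = suspend h (\<lambda>i. p (i + n)) s"
proof
  fix u
  have "(u + (s + of_int n * h)) / h = (u + s) / h + of_int n" using assms by (simp add: field_simps)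
  then show "suspend h p (s + of_int n * h) u = suspend h (\<lambda>i. p (i + n)) s u"
    unfolding suspend_def by simp
qed

lemma psi_suspend: "psi t (suspend h p s) = suspend h p (s + t)"
  unfolding psi_def suspend_def by (simp add: ac_simps)

lemma lift_eq_suspensions:
  assumes h: "h > 0"
  shows "lift E h C = {suspend h p s | p s. path_in E C p}"
proof (intro equalityI subsetI)
  fix f assume "f \<in> lift E h C"
  then obtain x t where x: "x \<in> Delta_bar E h" and f: "f = (\<lambda>u. x (u + t))" and fC: "\<forall>u. f u \<in> C"
    unfolding lift_def Delta_def by blast
  define p where "p i = x (of_int i * h)" for i
  have "x u = p \<lfloor>u / h\<rfloor>" for u
    using x floor_divide_eq_iff[OF h, of u] unfolding Delta_bar_def p_def by blast
  then have "f = suspend h p t" unfolding f suspend_def by simp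
  moreover have "x u \<in> C" for u using fC f by (metis diff_add_cancel)
  then have "path_in E C p"
    using x unfolding Delta_bar_def bi_paths_def path_in_def p_def by auto
  ultimately show "f \<in> {suspend h p s | p s. path_in E C p}" by blast
next
  fix f assume "f \<in> {suspend h p s | p s. path_in E C p}"
  then obtain p s where p: "path_in E C p" and f: "f = suspend h p s" by blast
  have grid: "suspend h p 0 (of_int i * h) = p i" for i
    using h by (simp add: suspend_def)
  have "suspend h p 0 \<in> Delta_bar E h"
    unfolding Delta_bar_def bi_paths_def
  proof (intro CollectI conjI allI impI)
    fix n :: int and t assume "of_int n * h \<le> t \<and> t < of_int (n + 1) * h"
    then have "\<lfloor>t / h\<rfloor> = n" using floor_divide_eq_iff[OF h] by simp
    then show "suspend h p 0 t = suspend h p 0 (of_int n * h)"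
      using grid by (simp add: suspend_def)
  next
    fix i :: int
    show "(suspend h p 0 (of_int i * h), suspend h p 0 (of_int (i + 1) * h)) \<in> E"
      using p unfolding grid path_in_def by blast
  qed
  moreover have "f = (\<lambda>u. suspend h p 0 (u + s))" unfolding f suspend_def by simp
  ultimately have "f \<in> Delta E h" unfolding Delta_def by blast
  moreover have "f u \<in> C" for u using path_in_memD[OF p] unfolding f suspend_def by blast
  ultimately show "f \<in> lift E h C" unfolding lift_def by blast
qed

text \<open>The block index of \<open>u + s\<close> for \<open>u\<close> in the window \<open>[-N h, (N + 1) h]\<close> stays within
  \<open>N + 1 + |s|/h\<close>.\<close>

lemma dist_suspend_le_if_agree:
  assumes h: "h > 0" and M: "real N + 1 + \<bar>s\<bar> / h \<le> real M"
    and agree: "\<And>i. \<bar>i\<bar> \<le> int M \<Longrightarrow> p i = q i"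
  shows "dist_Delta h (suspend h p s) (suspend h q s) \<le> (1/2) ^ N * dist_weight_sum"
proof (rule dist_Delta_le_if_agree[OF h])
  fix u assume "- real N * h \<le> u" "u \<le> (real N + 1) * h"
  then have "- real N \<le> u / h" "u / h \<le> real N + 1" using h by (simp_all add: field_simps)
  moreover have "\<bar>s / h\<bar> = \<bar>s\<bar> / h" using h by simp
  moreover have "(u + s) / h = u / h + s / h" by (simp add: add_divide_distrib)
  ultimately have "\<bar>\<lfloor>(u + s) / h\<rfloor>\<bar> \<le> int M" using M by linarith
  then show "suspend h p s u = suspend h q s u" unfolding suspend_def using agree by simp
qed

lemma dist_suspend_ge_1_if_differ:
  assumes h: "h > 0" and "p n \<noteq> q n"
  shows "1 \<le> dist_Delta h (suspend h p (of_int n * h)) (suspend h q (of_int n * h))"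
proof (rule dist_Delta_ge_1_if_differ[OF h])
  fix u assume "0 \<le> u" "u < h"
  then have "\<lfloor>(u + of_int n * h) / h\<rfloor> = n" using h by (simp add: floor_divide_eq_iff algebra_simps)
  then show "suspend h p (of_int n * h) u \<noteq> suspend h q (of_int n * h) u"
    unfolding suspend_def using assms(2) by simp
qed

lemma periodic_point_suspend:
  assumes h: "h > 0" and L: "L > 0" and per: "\<And>i. q (i + L) = q i"
  shows "periodic_point psi (suspend h q s)"
  unfolding periodic_point_def
proof (intro exI conjI)
  show "of_int L * h > 0" using h L by simp
  show "psi (of_int L * h) (suspend h q s) = suspend h q s"
    unfolding psi_suspend suspend_shift[OF h] per ..
qed

section \<open>Walks and periodic paths\<close>

definition walk :: "('v \<times> 'v) set \<Rightarrow> 'v set \<Rightarrow> 'v list \<Rightarrow> bool" where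
  "walk E C ws \<longleftrightarrow> ws \<noteq> [] \<and> set ws \<subseteq> C \<and> successively (\<lambda>a b. (a, b) \<in> E) ws"

lemma scc_trancl:
  assumes "scc E C" "u \<in> C" "v \<in> C"
  shows "(u, v) \<in> (E \<inter> C \<times> C)\<^sup>+"
proof -
  have "strongly_connected_in E C" using assms(1) by (simp add: scc_def)
  then show ?thesis using assms(2,3) unfolding strongly_connected_in_def by blast
qed

lemma walk_append:
  assumes "walk E C xs" "walk E C (last xs # ys)"
  shows "walk E C (xs @ ys)"
proof -
  have "successively (\<lambda>a b. (a, b) \<in> E) ys" "ys = [] \<or> (last xs, hd ys) \<in> E"
    using assms(2) unfolding walk_def by (auto simp: successively_Cons)
  then show ?thesis using assms unfolding walk_def by (auto simp: successively_append_iff)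
qed

lemma walk_prefix: "walk E C (xs @ ys) \<Longrightarrow> xs \<noteq> [] \<Longrightarrow> walk E C xs"
  unfolding walk_def by (auto simp: successively_append_iff)

lemma walk_edge:
  assumes "walk E C ws" "Suc j < length ws"
  shows "(ws ! j, ws ! Suc j) \<in> E \<inter> C \<times> C"
proof -
  have "ws ! j \<in> set ws" "ws ! Suc j \<in> set ws" using assms(2) by simp_all
  then show ?thesis using assms successively_nth[of "\<lambda>a b. (a, b) \<in> E" ws j] unfolding walk_def by auto
qed

lemma trancl_imp_walk:
  assumes "(a, b) \<in> (E \<inter> C \<times> C)\<^sup>+"
  shows "\<exists>ys. walk E C (a # ys @ [b])"
  using assms
proof (induction rule: trancl_induct)
  case (base y)
  then have "walk E C [a, y]" unfolding walk_def by auto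
  then show ?case by (intro exI[of _ "[]"]) simp
next
  case (step y z)
  then obtain ys where ys: "walk E C (a # ys @ [y])" by blast
  have "walk E C [y, z]" using step.hyps(2) unfolding walk_def by auto
  then have "walk E C ((a # ys @ [y]) @ [z])" using walk_append[OF ys] by simp
  then show ?case by (intro exI[of _ "ys @ [y]"]) simp
qed

lemma walk_connect:
  assumes scc: "scc E C" and a: "a \<in> C" and ws: "walk E C ws"
  shows "\<exists>ys. walk E C (a # ys @ ws)"
proof -
  obtain b bs where ws_eq: "ws = b # bs" using ws unfolding walk_def by (cases ws) auto
  then have "b \<in> C" using ws unfolding walk_def by simp
  then obtain ys where ys: "walk E C (a # ys @ [b])"
    using trancl_imp_walk[OF scc_trancl[OF scc a]] by blast
  have "last (a # ys @ [b]) # bs = ws" using ws_eq by simp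
  then have "walk E C ((a # ys @ [b]) @ bs)" using walk_append[OF ys, of bs] ws by simp
  then show ?thesis unfolding ws_eq by (intro exI[of _ ys]) simp
qed

lemma path_in_shift:
  assumes "path_in E C p"
  shows "path_in E C (\<lambda>i. p (i + k))"
  unfolding path_in_def
proof
  fix i
  have "(p (i + k), p (i + k + 1)) \<in> E \<inter> C \<times> C" using assms unfolding path_in_def by blast
  then show "(p (i + k), p (i + 1 + k)) \<in> E \<inter> C \<times> C" by (simp add: ac_simps)
qed

lemma path_window_walk:
  assumes p: "path_in E C p"
  shows "walk E C (map (\<lambda>j. p (a + int j)) [0..<Suc n])"
  unfolding walk_def
proof (intro conjI)
  show "set (map (\<lambda>j. p (a + int j)) [0..<Suc n]) \<subseteq> C" using path_in_memD[OF p] by auto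
  have "(p (a + int j), p (a + int j + 1)) \<in> E" for j using p unfolding path_in_def by blast
  then show "successively (\<lambda>x y. (x, y) \<in> E) (map (\<lambda>j. p (a + int j)) [0..<Suc n])"
    unfolding successively_conv_nth by (simp del: upt_Suc add: ac_simps)
qed simp

lemma window_nth:
  assumes "\<bar>i\<bar> \<le> int M"
  shows "nat (i + int M) < Suc (2 * M)" and "- int M + int (nat (i + int M)) = i"
    and "map (\<lambda>j. p (- int M + int j)) [0..<Suc (2 * M)] ! nat (i + int M) = p i"
proof -
  show *: "nat (i + int M) < Suc (2 * M)" and **: "- int M + int (nat (i + int M)) = i"
    using assms by linarith+
  show "map (\<lambda>j. p (- int M + int j)) [0..<Suc (2 * M)] ! nat (i + int M) = p i"
    using * ** by (simp del: upt_Suc)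
qed

lemma cycle_path:
  assumes "c \<noteq> []" and walk: "walk E C (c @ [hd c])"
  shows "path_in E C (\<lambda>i. c ! nat (i mod int (length c)))"
  unfolding path_in_def
proof
  fix i :: int
  let ?L = "int (length c)" and ?c' = "c @ [hd c]"
  define r where "r = nat (i mod ?L)"
  have r: "r < length c" using assms(1) unfolding r_def by (simp add: nat_less_iff)
  have "c ! r = ?c' ! r" using r by (simp add: nth_append)
  moreover have "c ! nat ((i + 1) mod ?L) = ?c' ! Suc r"
  proof -
    have "(i + 1) mod ?L = (int r + 1) mod ?L"
      unfolding r_def using assms(1) by (simp add: mod_add_left_eq)
    then show ?thesis
    proof (cases "Suc r < length c")
      case True
      then have "nat ((i + 1) mod ?L) = Suc r"
        using \<open>(i + 1) mod ?L = (int r + 1) mod ?L\<close> by (simp add: nat_add_distrib)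
      then show ?thesis using True by (simp add: nth_append)
    next
      case False
      then have "Suc r = length c" using r by simp
      then have "int r + 1 = ?L" by simp
      then have "(i + 1) mod ?L = 0" using \<open>(i + 1) mod ?L = (int r + 1) mod ?L\<close> by simp
      then show ?thesis using \<open>Suc r = length c\<close> assms(1) by (simp add: nth_append hd_conv_nth)
    qed
  qed
  moreover have "(?c' ! r, ?c' ! Suc r) \<in> E \<inter> C \<times> C" using walk_edge[OF walk] r by simp
  ultimately show "(c ! nat (i mod ?L), c ! nat ((i + 1) mod ?L)) \<in> E \<inter> C \<times> C"
    unfolding r_def by simp
qed

text \<open>Close the walk up by a connecting walk from its last vertex back to its first one and
  repeat the resulting cycle.\<close>

lemma walk_extends_to_periodic_path:
  assumes scc: "scc E C" and ws: "walk E C ws"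
  shows "\<exists>q L. L > 0 \<and> path_in E C q \<and> (\<forall>i. q (i + L) = q i)
               \<and> (\<forall>j < length ws. q (a + int j) = ws ! j)"
proof -
  have "last ws \<in> C" using ws unfolding walk_def by auto
  then obtain ys where "walk E C (last ws # ys @ ws)" using walk_connect[OF scc _ ws] by blast
  then have "walk E C (ws @ ys @ ws)" by (rule walk_append[OF ws])
  moreover define c where "c = ws @ ys"
  have ne: "c \<noteq> []" using ws unfolding c_def walk_def by simp
  moreover have "ws @ ys @ ws = (c @ [hd c]) @ tl ws" using ws unfolding c_def walk_def by simp
  ultimately have "walk E C (c @ [hd c])" using walk_prefix[of E C "c @ [hd c]" "tl ws"] by simp
  define L where "L = int (length c)"
  define q where "q i = c ! nat ((i - a) mod L)" for i
  have "path_in E C q"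
    using path_in_shift[OF cycle_path[OF ne \<open>walk E C (c @ [hd c])\<close>], of "- a"]
    unfolding q_def L_def by simp
  moreover have "q (i + L) = q i" for i
  proof -
    have "i + L - a = (i - a) + L" by simp
    then show ?thesis unfolding q_def by (simp only: mod_add_self2)
  qed
  moreover have "q (a + int j) = ws ! j" if "j < length ws" for j
    using that unfolding q_def L_def c_def by (simp add: nth_append)
  moreover have "L > 0" using ne unfolding L_def by simp
  ultimately show ?thesis by blast
qed

lemma exists_other_successor:
  assumes "out_degree_in E C v > 1"
  shows "\<exists>w\<in>C. (v, w) \<in> E \<and> w \<noteq> z"
proof (rule ccontr)
  assume "\<not> ?thesis"
  then have "{w \<in> C. (v, w) \<in> E} \<subseteq> {z}" by blast
  then have "card {w \<in> C. (v, w) \<in> E} \<le> 1" using card_mono[of "{z}"] by fastforce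
  then show False using assms unfolding out_degree_in_def by simp
qed

lemma exists_periodic_path_near:
  assumes scc: "scc E C" and p: "path_in E C p"
  shows "\<exists>q L. L > 0 \<and> path_in E C q \<and> (\<forall>i. q (i + L) = q i) \<and> (\<forall>i. \<bar>i\<bar> \<le> int M \<longrightarrow> q i = p i)"
proof -
  define u where "u = map (\<lambda>j. p (- int M + int j)) [0..<Suc (2 * M)]"
  obtain q L where q: "L > 0" "path_in E C q" "\<forall>i. q (i + L) = q i"
      "\<forall>j < length u. q (- int M + int j) = u ! j"
    using walk_extends_to_periodic_path[OF scc path_window_walk[OF p, of "- int M" "2 * M"], of "- int M"]
    unfolding u_def by blast
  have "q i = p i" if i: "\<bar>i\<bar> \<le> int M" for i
  proof -
    have "nat (i + int M) < length u" using window_nth(1)[OF i] unfolding u_def by simp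
    then show ?thesis using q(4) window_nth(2,3)[OF i] unfolding u_def by metis
  qed
  then show ?thesis using q(1-3) by blast
qed

lemma path_branches_off:
  assumes scc: "scc E C" and v: "v \<in> C" "out_degree_in E C v > 1" and p: "path_in E C p"
  shows "\<exists>q n. path_in E C q \<and> (\<forall>i. \<bar>i\<bar> \<le> int M \<longrightarrow> q i = p i) \<and> n > int M \<and> q n \<noteq> p n"
proof -
  define u where "u = map (\<lambda>j. p (- int M + int j)) [0..<Suc (2 * M)]"
  have u: "walk E C u" unfolding u_def by (rule path_window_walk[OF p])
  have len_u: "length u = Suc (2 * M)" unfolding u_def by simp
  have last_u: "last u = p (int M)" unfolding u_def by (simp add: last_map)
  obtain ys where ys: "walk E C (p (int M) # ys @ [v])"
    using trancl_imp_walk[OF scc_trancl[OF scc path_in_memD[OF p] v(1)]] by blast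
  define n where "n = int (length u + length ys + 1) - int M"
  obtain w where w: "w \<in> C" "(v, w) \<in> E" "w \<noteq> p n" using exists_other_successor[OF v(2)] by blast
  define ws where "ws = u @ ys @ [v, w]"
  have "walk E C [v, w]" using v w unfolding walk_def by simp
  then have "walk E C ((p (int M) # ys @ [v]) @ [w])" using walk_append[OF ys, of "[w]"] by simp
  then have "walk E C ws" using walk_append[OF u, of "ys @ [v, w]"] last_u unfolding ws_def by simp
  then obtain q where q: "path_in E C q" "\<forall>j < length ws. q (- int M + int j) = ws ! j"
    using walk_extends_to_periodic_path[OF scc, of ws "- int M"] by blast
  have "q i = p i" if i: "\<bar>i\<bar> \<le> int M" for i
  proof -
    have "nat (i + int M) < length ws" using window_nth(1)[OF i] len_u unfolding ws_def by simp
    then have "q (- int M + int (nat (i + int M))) = ws ! nat (i + int M)" using q(2) by blast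
    also have "\<dots> = u ! nat (i + int M)"
      using window_nth(1)[OF i] len_u unfolding ws_def by (simp add: nth_append)
    also have "\<dots> = p i" unfolding u_def by (rule window_nth(3)[OF i])
    finally show ?thesis using window_nth(2)[OF i] by simp
  qed
  moreover have "q n = w"
  proof -
    have "length u + length ys + 1 < length ws" "- int M + int (length u + length ys + 1) = n"
      unfolding ws_def n_def by simp_all
    then have "q n = ws ! (length u + length ys + 1)" using q(2) by metis
    then show ?thesis unfolding ws_def by (simp add: nth_append)
  qed
  moreover have "n > int M" unfolding n_def using len_u by simp
  ultimately show ?thesis using q(1) w(3) by blast
qed

section \<open>A universal path\<close>

text \<open>A path visiting every walk of \<open>C\<close> infinitely often: \<open>universal_prefix\<close> grows by
  appending, after a connecting walk, the walk coded by the first component of \<open>k\<close>; coding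
  pairs makes every walk recur for infinitely many \<open>k\<close>.\<close>

definition enum_walk :: "('v::finite \<times> 'v) set \<Rightarrow> 'v set \<Rightarrow> 'v \<Rightarrow> nat \<Rightarrow> 'v list" where
  "enum_walk E C c0 k = (let ws = from_nat (fst (prod_decode k)) in if walk E C ws then ws else [c0])"

definition connector :: "('v \<times> 'v) set \<Rightarrow> 'v set \<Rightarrow> 'v \<Rightarrow> 'v list \<Rightarrow> 'v list" where
  "connector E C a ws = (SOME ys. walk E C (a # ys @ ws))"

primrec universal_prefix :: "('v::finite \<times> 'v) set \<Rightarrow> 'v set \<Rightarrow> 'v \<Rightarrow> nat \<Rightarrow> 'v list" where
  "universal_prefix E C c0 0 = [c0]"
| "universal_prefix E C c0 (Suc k) = universal_prefix E C c0 k
     @ connector E C (last (universal_prefix E C c0 k)) (enum_walk E C c0 k) @ enum_walk E C c0 k"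

definition universal_seq :: "('v::finite \<times> 'v) set \<Rightarrow> 'v set \<Rightarrow> 'v \<Rightarrow> nat \<Rightarrow> 'v" where
  "universal_seq E C c0 i = universal_prefix E C c0 (Suc i) ! i"

lemma enum_walk_walk: "c0 \<in> C \<Longrightarrow> walk E C (enum_walk E C c0 k)"
  unfolding enum_walk_def Let_def walk_def by auto

lemma universal_prefix_walk:
  assumes scc: "scc E C" and c0: "c0 \<in> C"
  shows "walk E C (universal_prefix E C c0 k)"
proof (induction k)
  case 0
  then show ?case using c0 unfolding walk_def by simp
next
  case (Suc k)
  let ?a = "last (universal_prefix E C c0 k)" and ?w = "enum_walk E C c0 k"
  have "?a \<in> C" using Suc.IH unfolding walk_def by auto
  then have "\<exists>ys. walk E C (?a # ys @ ?w)" using walk_connect[OF scc _ enum_walk_walk[OF c0]] by blast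
  then have "walk E C (?a # connector E C ?a ?w @ ?w)" unfolding connector_def by (rule someI_ex)
  then show ?case using walk_append[OF Suc.IH] by simp
qed

lemma length_universal_prefix: "Suc k \<le> length (universal_prefix E C c0 k)"
proof (induction k)
  case (Suc k)
  have "enum_walk E C c0 k \<noteq> []" unfolding enum_walk_def Let_def walk_def by auto
  then have "0 < length (enum_walk E C c0 k)" by simp
  then show ?case using Suc.IH unfolding universal_prefix.simps length_append by linarith
qed simp

lemma universal_prefix_nth_stable:
  "i < length (universal_prefix E C c0 k) \<Longrightarrow> universal_prefix E C c0 (k + d) ! i = universal_prefix E C c0 k ! i"
proof (induction d)
  case (Suc d)
  have "length (universal_prefix E C c0 k) \<le> length (universal_prefix E C c0 (k + d))"
    by (induction d) auto
  then show ?case using Suc by (simp add: nth_append)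
qed simp

lemma universal_seq_eq_nth:
  assumes "i < length (universal_prefix E C c0 k)"
  shows "universal_seq E C c0 i = universal_prefix E C c0 k ! i"
proof (cases "Suc i \<le> k")
  case True
  have "i < length (universal_prefix E C c0 (Suc i))" using length_universal_prefix[of i E C c0] by simp
  then show ?thesis unfolding universal_seq_def
    using universal_prefix_nth_stable[of i E C c0 "Suc i" "k - Suc i"] True by simp
next
  case False
  then show ?thesis unfolding universal_seq_def
    using universal_prefix_nth_stable[OF assms, of "Suc i - k"] by simp
qed

lemma universal_seq_0: "universal_seq E C c0 0 = c0"
  using universal_seq_eq_nth[of 0 E C c0 0] by simp

lemma universal_seq_edge:
  assumes scc: "scc E C" and c0: "c0 \<in> C"
  shows "(universal_seq E C c0 i, universal_seq E C c0 (Suc i)) \<in> E \<inter> C \<times> C"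
proof -
  let ?L = "universal_prefix E C c0 (Suc (Suc i))"
  have len: "Suc (Suc i) < length ?L" using length_universal_prefix[of "Suc (Suc i)" E C c0] by simp
  then have "universal_seq E C c0 i = ?L ! i" "universal_seq E C c0 (Suc i) = ?L ! Suc i"
    by (intro universal_seq_eq_nth; linarith)+
  then show ?thesis using walk_edge[OF universal_prefix_walk[OF scc c0, of "Suc (Suc i)"], of i] len
    by (simp del: universal_prefix.simps)
qed

lemma universal_seq_contains:
  assumes c0: "c0 \<in> C" and ws: "walk E C ws"
  shows "\<exists>n \<ge> K. \<forall>j < length ws. universal_seq E C c0 (n + j) = ws ! j"
proof -
  define k where "k = prod_encode (to_nat ws, K)"
  have enum: "enum_walk E C c0 k = ws" unfolding enum_walk_def k_def using ws by simp
  let ?P = "universal_prefix E C c0 k"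
  define n where "n = length ?P + length (connector E C (last ?P) ws)"
  have "K \<le> k" unfolding k_def by (rule le_prod_encode_2)
  then have "K \<le> n" unfolding n_def using length_universal_prefix[of k E C c0] by simp
  moreover have "universal_seq E C c0 (n + j) = ws ! j" if "j < length ws" for j
  proof -
    have P: "universal_prefix E C c0 (Suc k) = ?P @ connector E C (last ?P) ws @ ws"
      using enum by simp
    then have "universal_seq E C c0 (n + j) = universal_prefix E C c0 (Suc k) ! (n + j)"
      using that unfolding n_def by (intro universal_seq_eq_nth) simp
    also have "\<dots> = ws ! j" unfolding P n_def by (simp add: nth_append)
    finally show ?thesis .
  qed
  ultimately show ?thesis by blast
qed

lemma path_in_glue:
  assumes r: "path_in E C r" and G: "\<And>n. (G n, G (Suc n)) \<in> E \<inter> C \<times> C" and "r 0 = G 0"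
  shows "path_in E C (\<lambda>i. if i \<le> 0 then r i else G (nat i))"
  unfolding path_in_def
proof
  fix i :: int
  show "((if i \<le> 0 then r i else G (nat i)), (if i + 1 \<le> 0 then r (i + 1) else G (nat (i + 1))))
      \<in> E \<inter> C \<times> C"
  proof (cases "i < 0")
    case True
    then show ?thesis using r unfolding path_in_def by simp
  next
    case False
    then have "(if i \<le> 0 then r i else G (nat i)) = G (nat i)" using assms(3) by auto
    moreover have "nat (i + 1) = Suc (nat i)" using False by simp
    ultimately show ?thesis using G[of "nat i"] False by simp
  qed
qed

text \<open>On the negative half-line the universal sequence is continued by a periodic path
  through its first vertex.\<close>

lemma exists_universal_path:
  fixes E :: "('v::finite \<times> 'v) set"
  assumes scc: "scc E C"
  shows "\<exists>q. path_in E C q \<and> (\<forall>p M K. path_in E C p \<longrightarrow>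
              (\<exists>m \<ge> int K. \<forall>i. \<bar>i\<bar> \<le> int M \<longrightarrow> q (i + m) = p i))"
proof -
  obtain c0 where c0: "c0 \<in> C" using scc unfolding scc_def by blast
  have "walk E C [c0]" using c0 unfolding walk_def by simp
  then obtain r where r: "path_in E C r" "r 0 = c0"
    using walk_extends_to_periodic_path[OF scc, of "[c0]" 0] by auto
  define G where "G = universal_seq E C c0"
  define q where "q i = (if i \<le> 0 then r i else G (nat i))" for i
  have q_pos: "q i = G (nat i)" if "0 \<le> i" for i
    using that unfolding q_def G_def by (auto simp: r(2) universal_seq_0)
  have "path_in E C q"
    unfolding q_def G_def using universal_seq_edge[OF scc c0] r(1)
    by (intro path_in_glue) (auto simp: r(2) universal_seq_0)
  moreover have "\<exists>m \<ge> int K. \<forall>i. \<bar>i\<bar> \<le> int M \<longrightarrow> q (i + m) = p i"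
    if p: "path_in E C p" for p M K
  proof -
    define u where "u = map (\<lambda>j. p (- int M + int j)) [0..<Suc (2 * M)]"
    obtain n where n: "n \<ge> K" "\<forall>j < length u. G (n + j) = u ! j"
      using universal_seq_contains[OF c0 path_window_walk[OF p, of "- int M" "2 * M"]]
      unfolding u_def G_def by blast
    have "q (i + (int n + int M)) = p i" if i: "\<bar>i\<bar> \<le> int M" for i
    proof -
      have "i + (int n + int M) = int (n + nat (i + int M))" using window_nth(2)[OF i] by linarith
      then have "q (i + (int n + int M)) = G (n + nat (i + int M))"
        using q_pos[of "int (n + nat (i + int M))"] by (simp only: nat_int of_nat_0_le_iff)
      also have "\<dots> = u ! nat (i + int M)" using n(2) window_nth(1)[OF i] unfolding u_def by simp
      also have "\<dots> = p i" unfolding u_def by (rule window_nth(3)[OF i])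
      finally show ?thesis .
    qed
    then show ?thesis using n(1) by (intro exI[of _ "int n + int M"]) auto
  qed
  ultimately show ?thesis by blast
qed

section \<open>Chaos\<close>

lemma weight_bound_tendsto_0: "(\<lambda>N. (1/2::real) ^ N * dist_weight_sum) \<longlonglongrightarrow> 0"
proof -
  have "(\<lambda>N. (1/2::real) ^ N * dist_weight_sum) \<longlonglongrightarrow> 0 * dist_weight_sum"
    by (intro tendsto_mult LIMSEQ_power_zero tendsto_const) simp
  then show ?thesis by simp
qed

lemma exists_weight_bound_less: "e > 0 \<Longrightarrow> \<exists>N. (1/2::real) ^ N * dist_weight_sum < e"
proof -
  assume e: "e > 0"
  obtain N where "norm ((1/2::real) ^ N * dist_weight_sum - 0) < e"
    using LIMSEQ_D[OF weight_bound_tendsto_0 e] by blast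
  then show ?thesis by (auto simp: abs_less_iff)
qed

lemma window_radius_bound: "h > 0 \<Longrightarrow> real N + 1 + \<bar>s\<bar> / h \<le> real (N + 1 + nat \<lceil>\<bar>s\<bar> / h\<rceil>)"
  by (simp add: real_nat_ceiling_ge)

lemma sensitive_lift:
  assumes h: "h > 0" and scc: "scc E C" and v: "v \<in> C" "out_degree_in E C v > 1"
  shows "sensitive (lift E h C) (dist_Delta h) psi"
  unfolding sensitive_def
proof (intro exI[of _ "1/2"] conjI ballI allI impI)
  fix x B assume x: "x \<in> lift E h C"
    and B: "B \<subseteq> lift E h C \<and> (\<exists>e>0. {y \<in> lift E h C. dist_Delta h x y < e} \<subseteq> B)"
  obtain p s where p: "path_in E C p" and x_eq: "x = suspend h p s"
    using x lift_eq_suspensions[OF h] by blast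
  obtain e where e: "e > 0" "{y \<in> lift E h C. dist_Delta h x y < e} \<subseteq> B" using B by blast
  obtain N where N: "(1/2::real) ^ N * dist_weight_sum < e" using exists_weight_bound_less[OF e(1)] by blast
  define M where "M = N + 1 + nat \<lceil>\<bar>s\<bar> / h\<rceil>"
  have M: "real N + 1 + \<bar>s\<bar> / h \<le> real M" unfolding M_def by (rule window_radius_bound[OF h])
  obtain q n where q: "path_in E C q" "\<forall>i. \<bar>i\<bar> \<le> int M \<longrightarrow> q i = p i" "n > int M" "q n \<noteq> p n"
    using path_branches_off[OF scc v p] by blast
  define y where "y = suspend h q s"
  have "y \<in> lift E h C" using q(1) lift_eq_suspensions[OF h] unfolding y_def by blast
  moreover have "dist_Delta h x y \<le> (1/2) ^ N * dist_weight_sum"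
    unfolding x_eq y_def using q(2) by (intro dist_suspend_le_if_agree[OF h M]) simp
  ultimately have "y \<in> B" using e N by auto
  moreover have "s < of_int n * h"
  proof -
    have "\<bar>s\<bar> / h \<le> real M" using M by linarith
    then have "\<bar>s\<bar> \<le> real M * h" using h by (simp add: pos_divide_le_eq)
    also have "\<dots> < of_int n * h" using q(3) h by simp
    finally show ?thesis by linarith
  qed
  moreover have "1 \<le> dist_Delta h (psi (of_int n * h - s) x) (psi (of_int n * h - s) y)"
    unfolding x_eq y_def psi_suspend using dist_suspend_ge_1_if_differ[of h p n q, OF h q(4)[symmetric]] by simp
  ultimately show "\<exists>y\<in>B. \<exists>t>0. 1/2 < dist_Delta h (psi t x) (psi t y)"
    by (intro bexI[of _ y] exI[of _ "of_int n * h - s"]) auto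
qed simp

lemma dense_periodic_lift:
  assumes h: "h > 0" and scc: "scc E C"
  shows "dense_periodic (lift E h C) (dist_Delta h) psi"
  unfolding dense_periodic_def
proof (intro ballI allI impI)
  fix x and e :: real assume x: "x \<in> lift E h C" and e: "e > 0"
  obtain p s where p: "path_in E C p" and x_eq: "x = suspend h p s"
    using x lift_eq_suspensions[OF h] by blast
  obtain N where N: "(1/2::real) ^ N * dist_weight_sum < e" using exists_weight_bound_less[OF e] by blast
  define M where "M = N + 1 + nat \<lceil>\<bar>s\<bar> / h\<rceil>"
  have M: "real N + 1 + \<bar>s\<bar> / h \<le> real M" unfolding M_def by (rule window_radius_bound[OF h])
  obtain q L where q: "L > 0" "path_in E C q" "\<forall>i. q (i + L) = q i" "\<forall>i. \<bar>i\<bar> \<le> int M \<longrightarrow> q i = p i"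
    using exists_periodic_path_near[OF scc p] by blast
  define y where "y = suspend h q s"
  have "y \<in> lift E h C" using q(2) lift_eq_suspensions[OF h] unfolding y_def by blast
  moreover have "periodic_point psi y" unfolding y_def using q(1,3) by (intro periodic_point_suspend[OF h]) auto
  moreover have "dist_Delta h x y \<le> (1/2) ^ N * dist_weight_sum"
    unfolding x_eq y_def using q(4) by (intro dist_suspend_le_if_agree[OF h M]) simp
  ultimately show "\<exists>y\<in>lift E h C. periodic_point psi y \<and> dist_Delta h x y < e" using N by force
qed

lemma filterlim_grid_times_at_top:
  fixes h s :: real
  assumes h: "h > 0" and m: "\<And>k. int k \<le> m k"
  shows "filterlim (\<lambda>k. of_int (m k) * h + s) at_top sequentially"
proof (rule filterlim_at_top[THEN iffD2], intro allI)
  fix Z :: real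
  show "\<forall>\<^sub>F k in sequentially. Z \<le> of_int (m k) * h + s"
  proof (rule eventually_sequentiallyI)
    fix k assume "nat \<lceil>(Z - s) / h\<rceil> \<le> k"
    then have "(Z - s) / h \<le> real k" by linarith
    then have "Z - s \<le> real k * h" using h by (simp add: pos_divide_le_eq)
    also have "\<dots> \<le> of_int (m k) * h" using m[of k] h by (intro mult_right_mono) auto
    finally show "Z \<le> of_int (m k) * h + s" by simp
  qed
qed

lemma tendsto_dist_suspend_shifts:
  assumes h: "h > 0"
    and agree: "\<And>k i. \<bar>i\<bar> \<le> int (k + 1 + nat \<lceil>\<bar>s\<bar> / h\<rceil>) \<Longrightarrow> q (i + m k) = p i"
  shows "(\<lambda>k. dist_Delta h (suspend h q (of_int (m k) * h + s)) (suspend h p s)) \<longlonglongrightarrow> 0"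
proof (rule tendsto_sandwich[OF _ _ tendsto_const weight_bound_tendsto_0])
  have "dist_Delta h (suspend h q (of_int (m k) * h + s)) (suspend h p s) \<le> (1/2) ^ k * dist_weight_sum" for k
  proof -
    have "suspend h q (of_int (m k) * h + s) = suspend h (\<lambda>i. q (i + m k)) s"
      using suspend_shift[OF h, of q s "m k"] by (simp add: ac_simps)
    then show ?thesis
      using dist_suspend_le_if_agree[OF h window_radius_bound[OF h], of k s "\<lambda>i. q (i + m k)" p] agree
      by simp
  qed
  then show "\<forall>\<^sub>F k in sequentially.
      dist_Delta h (suspend h q (of_int (m k) * h + s)) (suspend h p s) \<le> (1/2) ^ k * dist_weight_sum"
    by simp
  show "\<forall>\<^sub>F k in sequentially. 0 \<le> dist_Delta h (suspend h q (of_int (m k) * h + s)) (suspend h p s)"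
    by (simp add: dist_Delta_nonneg[OF h])
qed

lemma transitive_lift:
  fixes E :: "('v::finite \<times> 'v) set"
  assumes h: "h > 0" and scc: "scc E C"
  shows "transitive (lift E h C) (dist_Delta h) psi"
proof -
  obtain q where q: "path_in E C q" "\<forall>p M K. path_in E C p \<longrightarrow>
      (\<exists>m \<ge> int K. \<forall>i. \<bar>i\<bar> \<le> int M \<longrightarrow> q (i + m) = p i)"
    using exists_universal_path[OF scc] by blast
  define x0 where "x0 = suspend h q 0"
  have "x0 \<in> lift E h C" using q(1) lift_eq_suspensions[OF h] unfolding x0_def by blast
  have "y \<in> omega_limit (lift E h C) (dist_Delta h) psi x0" if y: "y \<in> lift E h C" for y
  proof -
    obtain p s where p: "path_in E C p" and y_eq: "y = suspend h p s"
      using y lift_eq_suspensions[OF h] by blast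
    have "\<forall>k. \<exists>m \<ge> int k. \<forall>i. \<bar>i\<bar> \<le> int (k + 1 + nat \<lceil>\<bar>s\<bar> / h\<rceil>) \<longrightarrow> q (i + m) = p i"
      using q(2) p by blast
    then obtain m where m: "\<And>k. int k \<le> m k"
        "\<And>k i. \<bar>i\<bar> \<le> int (k + 1 + nat \<lceil>\<bar>s\<bar> / h\<rceil>) \<Longrightarrow> q (i + m k) = p i"
      by metis
    have "(\<lambda>k. dist_Delta h (psi (of_int (m k) * h + s) x0) y) \<longlonglongrightarrow> 0"
      unfolding x0_def psi_suspend y_eq using tendsto_dist_suspend_shifts[of h s q m p, OF h m(2)] by simp
    then show ?thesis
      unfolding omega_limit_def using y filterlim_grid_times_at_top[OF h m(1), of s] by blast
  qed
  then have "omega_limit (lift E h C) (dist_Delta h) psi x0 = lift E h C"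
    unfolding omega_limit_def by blast
  with \<open>x0 \<in> lift E h C\<close> show ?thesis unfolding transitive_def by blast
qed

section \<open>Out-degree one\<close>

definition succ_in :: "('v \<times> 'v) set \<Rightarrow> 'v set \<Rightarrow> 'v \<Rightarrow> 'v" where
  "succ_in E C v = (THE w. w \<in> C \<and> (v, w) \<in> E)"

lemma succ_in_iff:
  assumes deg: "\<forall>v\<in>C. out_degree_in E C v = 1" and v: "v \<in> C"
  shows "w \<in> C \<and> (v, w) \<in> E \<longleftrightarrow> w = succ_in E C v"
proof -
  have "card {w \<in> C. (v, w) \<in> E} = 1" using deg v unfolding out_degree_in_def by blast
  then obtain z where z: "{w \<in> C. (v, w) \<in> E} = {z}" using card_1_singletonE by blast
  then have iff: "w \<in> C \<and> (v, w) \<in> E \<longleftrightarrow> w = z" for w by blast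
  then have "succ_in E C v = z" unfolding succ_in_def by simp
  then show ?thesis using iff by simp
qed

lemma path_in_succ_in:
  assumes deg: "\<forall>v\<in>C. out_degree_in E C v = 1" and q: "path_in E C q"
  shows "q (i + 1) = succ_in E C (q i)"
  using q succ_in_iff[OF deg path_in_memD[OF q, of i], of "q (i + 1)"] unfolding path_in_def by blast

lemma path_in_funpow_succ_in:
  assumes deg: "\<forall>v\<in>C. out_degree_in E C v = 1" and q: "path_in E C q"
  shows "q (int k) = (succ_in E C ^^ k) (q 0)"
proof (induction k)
  case (Suc k)
  have "q (int (Suc k)) = succ_in E C (q (int k))"
    using path_in_succ_in[OF deg q, of "int k"] by (simp add: add.commute)
  then show ?case using Suc.IH by simp
qed simp

lemma trancl_funpow_succ_in:
  assumes deg: "\<forall>v\<in>C. out_degree_in E C v = 1" and "(c, v) \<in> (E \<inter> C \<times> C)\<^sup>+"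
  shows "\<exists>k. v = (succ_in E C ^^ k) c"
  using assms(2)
proof (induction rule: trancl_induct)
  case (base y)
  then have "y = succ_in E C c" using succ_in_iff[OF deg, of c y] by blast
  then show ?case by (intro exI[of _ 1]) simp
next
  case (step y z)
  then obtain k where "y = (succ_in E C ^^ k) c" by blast
  moreover have "z = succ_in E C y" using step.hyps(2) succ_in_iff[OF deg, of y z] by blast
  ultimately show ?case by (intro exI[of _ "Suc k"]) simp
qed

lemma inj_on_succ_in:
  fixes E :: "('v::finite \<times> 'v) set"
  assumes scc: "scc E C" and deg: "\<forall>v\<in>C. out_degree_in E C v = 1"
  shows "inj_on (succ_in E C) C"
proof (rule finite_surj_inj)
  show "C \<subseteq> succ_in E C ` C"
  proof
    fix v assume v: "v \<in> C"
    obtain w where w: "(w, v) \<in> E \<inter> C \<times> C" using tranclD2[OF scc_trancl[OF scc v v]] by blast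
    then have "v = succ_in E C w" using succ_in_iff[OF deg, of w v] by blast
    then show "v \<in> succ_in E C ` C" using w by blast
  qed
qed simp

text \<open>A path is determined by a single vertex: forwards by the successor function, backwards
  by its injectivity.\<close>

lemma path_in_eqI:
  fixes E :: "('v::finite \<times> 'v) set"
  assumes scc: "scc E C" and deg: "\<forall>v\<in>C. out_degree_in E C v = 1"
    and q: "path_in E C q" and r: "path_in E C r" and "q 0 = r 0"
  shows "q = r"
proof
  fix i :: int
  show "q i = r i"
  proof (induction i rule: int_induct[where k = 0])
    case base
    then show ?case using assms(5) .
  next
    case (step1 i)
    then show ?case using path_in_succ_in[OF deg q, of i] path_in_succ_in[OF deg r, of i] by simp
  next
    case (step2 i)
    have "succ_in E C (q (i - 1)) = succ_in E C (r (i - 1))"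
      using path_in_succ_in[OF deg q, of "i - 1"] path_in_succ_in[OF deg r, of "i - 1"] step2.IH by simp
    then show ?case
      using inj_on_succ_in[OF scc deg] path_in_memD[OF q] path_in_memD[OF r] unfolding inj_on_def by blast
  qed
qed

lemma lift_single_periodic_orbit:
  fixes E :: "('v::finite \<times> 'v) set"
  assumes h: "h > 0" and scc: "scc E C" and deg: "\<forall>v\<in>C. out_degree_in E C v = 1"
  shows "\<exists>x\<in>lift E h C. periodic_point psi x \<and> lift E h C = {psi t x | t. True}"
proof -
  obtain c where c: "c \<in> C" using scc unfolding scc_def by blast
  then have "walk E C [c]" unfolding walk_def by simp
  then obtain q L where q: "L > 0" "path_in E C q" "\<forall>i. q (i + L) = q i" "q 0 = c"
    using walk_extends_to_periodic_path[OF scc, of "[c]" 0] by auto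
  define x where "x = suspend h q 0"
  have "{psi t x | t. True} = {suspend h q t | t. True}" unfolding x_def psi_suspend by simp
  also have "\<dots> = lift E h C"
  proof -
    have "suspend h r s \<in> {suspend h q t | t. True}" if r: "path_in E C r" for r s
    proof -
      obtain k where k: "r 0 = (succ_in E C ^^ k) c"
        using trancl_funpow_succ_in[OF deg scc_trancl[OF scc c path_in_memD[OF r]]] by blast
      have "(\<lambda>i. q (i + int k)) = r"
        using k path_in_funpow_succ_in[OF deg q(2), of k] q(4)
        by (intro path_in_eqI[OF scc deg path_in_shift[OF q(2)] r]) simp
      then have "suspend h r s = suspend h q (s + of_int (int k) * h)" using suspend_shift[OF h] by metis
      then show ?thesis by blast
    qed
    moreover have "path_in E C q" by (rule q(2))
    ultimately show ?thesis unfolding lift_eq_suspensions[OF h] by blast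
  qed
  finally have "lift E h C = {psi t x | t. True}" ..
  moreover have "periodic_point psi x" unfolding x_def using q(1,3) by (intro periodic_point_suspend[OF h]) auto
  moreover have "x \<in> lift E h C" using q(2) lift_eq_suspensions[OF h] unfolding x_def by blast
  ultimately show ?thesis by blast
qed

theorem mainTheorem13:
  fixes E :: "('v::finite \<times> 'v) set" and h :: real and C :: "'v set"
  assumes "h > 0" and "scc E C"
  shows "((\<exists>v\<in>C. out_degree_in E C v > 1) \<longrightarrow> chaotic (lift E h C) (dist_Delta h) psi)
       \<and> ((\<forall>v\<in>C. out_degree_in E C v = 1) \<longrightarrow>
            (\<exists>x\<in>lift E h C. periodic_point psi x \<and> lift E h C = {psi t x | t. True}))"
proof (intro conjI impI)
  assume "\<exists>v\<in>C. out_degree_in E C v > 1"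
  then obtain v where "v \<in> C" "out_degree_in E C v > 1" by blast
  then show "chaotic (lift E h C) (dist_Delta h) psi"
    unfolding chaotic_def
    using sensitive_lift[OF assms] dense_periodic_lift[OF assms] transitive_lift[OF assms] by blast
next
  assume "\<forall>v\<in>C. out_degree_in E C v = 1"
  then show "\<exists>x\<in>lift E h C. periodic_point psi x \<and> lift E h C = {psi t x | t. True}"
    using lift_single_periodic_orbit[OF assms] by blast
qed

end
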